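(* If $\mathcal{A}$ and $\mathcal{B}$ are leaktight probabilistic automata over the same alphabet, then their synchronised product $\mathcal{A}\times\mathcal{B}$ is leaktight.
   Context: Fix a finite alphabet $A$. Here a probabilistic automaton (ignoring initial and final states, which play no role) is a pair $(Q,\Delta)$ with $Q$ finite and $\Delta:Q\times A\to\mathcal{D}(Q)$. For $a\in A$ let $M_a(s,t)=\Delta(s,a)(t)$, for $u=a_0\cdots a_{n-1}$ let $M_u=M_{a_0}\cdots M_{a_{n-1}}$ (identity for the empty word), and $\mathbb{P}(s\xrightarrow{u}t)=M_u(s,t)$. A nonnegative $Q\times Q$ matrix $M$ is idempotent if $M(s,t)>0\iff M^2(s,t)>0$ for all $s,t$; a word $u$ is idempotent if $M_u$ is. A leak is a sequence $(u_n)$ of idempotent words such that $M_{u_n}$ converges to an idempotent matrix $M$ and there exist states $r,q$, both recurrent in the Markov chain with transition matrix $M$, with $\lim_n\mathbb{P}(r\xrightarrow{u_n}q)=0$ and $\mathbb{P}(r\xrightarrow{u_n}q)>0$ for all $n$; the automaton is leaktight if it has no leak. For $\mathcal{A}=(Q^{\mathcal{A}},\Delta^{\mathcal{A}})$ and $\mathcal{B}=(Q^{\mathcal{B}},\Delta^{\mathcal{B}})$, the synchronised product is $\mathcal{A}\times\mathcal{B}=(Q^{\mathcal{A}}\times Q^{\mathcal{B}},\Delta)$ where $\Delta((q,p),a)$ is the product distribution $\Delta((q,p),a)(q',p')=\Delta^{\mathcal{A}}(q,a)(q')\cdot\Delta^{\mathcal{B}}(p,a)(p')$. *)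

theory Defs
  imports "HOL-Probability.Probability"
begin

definition trans_mat :: "('q \<Rightarrow> 'a \<Rightarrow> 'q pmf) \<Rightarrow> 'a \<Rightarrow> 'q \<Rightarrow> 'q \<Rightarrow> real" where
  "trans_mat \<Delta> a s t = pmf (\<Delta> s a) t"

definition mat_mult :: "('q::finite \<Rightarrow> 'q \<Rightarrow> real) \<Rightarrow> ('q \<Rightarrow> 'q \<Rightarrow> real) \<Rightarrow> 'q \<Rightarrow> 'q \<Rightarrow> real" where
  "mat_mult M N s t = (\<Sum>u\<in>UNIV. M s u * N u t)"

definition mat_id :: "'q \<Rightarrow> 'q \<Rightarrow> real" where
  "mat_id s t = (if s = t then 1 else 0)"

definition word_mat :: "('q::finite \<Rightarrow> 'a \<Rightarrow> 'q pmf) \<Rightarrow> 'a list \<Rightarrow> 'q \<Rightarrow> 'q \<Rightarrow> real" where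
  "word_mat \<Delta> w = foldr (\<lambda>a M. mat_mult (trans_mat \<Delta> a) M) w mat_id"

definition idempotent_mat :: "('q::finite \<Rightarrow> 'q \<Rightarrow> real) \<Rightarrow> bool" where
  "idempotent_mat M \<longleftrightarrow> (\<forall>s t. M s t > 0 \<longleftrightarrow> mat_mult M M s t > 0)"

text \<open>Recurrence of a state in the finite Markov chain with transition matrix M:
  every state reachable from s (in the support graph of M) can reach s back.\<close>
definition recurrent :: "('q \<Rightarrow> 'q \<Rightarrow> real) \<Rightarrow> 'q \<Rightarrow> bool" where
  "recurrent M s \<longleftrightarrow>
     (\<forall>t. (s, t) \<in> {(x, y). M x y > 0}\<^sup>* \<longrightarrow> (t, s) \<in> {(x, y). M x y > 0}\<^sup>*)"

definition is_leak :: "('q::finite \<Rightarrow> 'a \<Rightarrow> 'q pmf) \<Rightarrow> (nat \<Rightarrow> 'a list) \<Rightarrow> bool" where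
  "is_leak \<Delta> u \<longleftrightarrow>
     (\<forall>n. idempotent_mat (word_mat \<Delta> (u n))) \<and>
     (\<exists>M r q. (\<forall>s t. (\<lambda>n. word_mat \<Delta> (u n) s t) \<longlonglongrightarrow> M s t) \<and>
              idempotent_mat M \<and> recurrent M r \<and> recurrent M q \<and>
              (\<lambda>n. word_mat \<Delta> (u n) r q) \<longlonglongrightarrow> 0 \<and>
              (\<forall>n. word_mat \<Delta> (u n) r q > 0))"

definition leaktight :: "('q::finite \<Rightarrow> 'a \<Rightarrow> 'q pmf) \<Rightarrow> bool" where
  "leaktight \<Delta> \<longleftrightarrow> \<not> (\<exists>u. is_leak \<Delta> u)"

definition sync_product ::
  "('q \<Rightarrow> 'a \<Rightarrow> 'q pmf) \<Rightarrow> ('p \<Rightarrow> 'a \<Rightarrow> 'p pmf) \<Rightarrow> ('q \<times> 'p) \<Rightarrow> 'a \<Rightarrow> ('q \<times> 'p) pmf" where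
  "sync_product \<Delta>A \<Delta>B = (\<lambda>(q, p) a. pair_pmf (\<Delta>A q a) (\<Delta>B p a))"

end

theory Submission
  imports Defs
begin

text \<open>The matrix of a word in \<open>\<A> \<times> \<B>\<close> is the Kronecker product of its matrices in
  \<open>\<A>\<close> and \<open>\<B>\<close>. For nonnegative matrices the support of a Kronecker product is the
  product of the supports, and since every row of a stochastic matrix has a positive entry,
  idempotency and recurrence in the product pass to both factors. Given a leak of
  \<open>\<A> \<times> \<B>\<close>, choose a subsequence along which both factor matrices converge, to
  \<open>L\<^sub>A\<close> and \<open>L\<^sub>B\<close>; the limit is then \<open>L\<^sub>A \<otimes> L\<^sub>B\<close>, so the vanishing limit entry
  \<open>L\<^sub>A(r\<^sub>1,q\<^sub>1) L\<^sub>B(r\<^sub>2,q\<^sub>2)\<close> makes the subsequence a leak of \<open>\<A>\<close> or of \<open>\<B>\<close>.\<close>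

definition prod_rel :: "('a \<times> 'b) set \<Rightarrow> ('c \<times> 'd) set \<Rightarrow> (('a \<times> 'c) \<times> ('b \<times> 'd)) set" where
  "prod_rel S T = {((s, s'), (t, t')). (s, t) \<in> S \<and> (s', t') \<in> T}"

lemma mem_prod_rel [simp]: "((s, s'), (t, t')) \<in> prod_rel S T \<longleftrightarrow> (s, t) \<in> S \<and> (s', t') \<in> T"
  by (simp add: prod_rel_def)

lemma relcomp_prod_rel: "prod_rel S T O prod_rel S' T' = prod_rel (S O S') (T O T')"
  by (auto simp: prod_rel_def)

lemma relpow_prod_rel:
  fixes S :: "('a \<times> 'a) set" and T :: "('b \<times> 'b) set"
  shows "prod_rel S T ^^ n = prod_rel (S ^^ n) (T ^^ n)"
proof (induction n)
  case 0
  show ?case by (auto simp: prod_rel_def)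
next
  case (Suc n)
  then show ?case by (simp add: relcomp_prod_rel)
qed

lemma prod_rel_inject:
  assumes "S \<noteq> {}" "T \<noteq> {}"
  shows "prod_rel S T = prod_rel S' T' \<longleftrightarrow> S = S' \<and> T = T'"
  using assms unfolding prod_rel_def set_eq_iff by (auto simp: split_paired_all) blast+

lemma Domain_relpow:
  fixes R :: "('a \<times> 'a) set"
  assumes "Domain R = UNIV"
  shows "Domain (R ^^ n) = UNIV"
proof (induction n)
  case (Suc n)
  show ?case
  proof (intro set_eqI iffI UNIV_I)
    fix x
    obtain y where "(x, y) \<in> R ^^ n" using Suc by blast
    moreover obtain z where "(y, z) \<in> R" using assms by blast
    ultimately show "x \<in> Domain (R ^^ Suc n)" by (auto intro: relpow_Suc_I)
  qed
qed simp

definition mat_kron ::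
  "('q \<Rightarrow> 'q \<Rightarrow> real) \<Rightarrow> ('p \<Rightarrow> 'p \<Rightarrow> real) \<Rightarrow> 'q \<times> 'p \<Rightarrow> 'q \<times> 'p \<Rightarrow> real" where
  "mat_kron A B = (\<lambda>(s, s') (t, t'). A s t * B s' t')"

lemma mat_kron_apply [simp]: "mat_kron A B (s, s') (t, t') = A s t * B s' t'"
  by (simp add: mat_kron_def)

definition stochastic_mat :: "('q::finite \<Rightarrow> 'q \<Rightarrow> real) \<Rightarrow> bool" where
  "stochastic_mat M \<longleftrightarrow> (\<forall>s t. 0 \<le> M s t) \<and> (\<forall>s. (\<Sum>t\<in>UNIV. M s t) = 1)"

abbreviation mat_support :: "('q \<Rightarrow> 'q \<Rightarrow> real) \<Rightarrow> ('q \<times> 'q) set" where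
  "mat_support M \<equiv> {(s, t). M s t > 0}"

lemma mat_mult_mat_kron:
  fixes A C :: "'q::finite \<Rightarrow> 'q \<Rightarrow> real" and B D :: "'p::finite \<Rightarrow> 'p \<Rightarrow> real"
  shows "mat_mult (mat_kron A B) (mat_kron C D) = mat_kron (mat_mult A C) (mat_mult B D)"
proof (intro ext, clarify)
  fix s s' t t'
  have "mat_mult (mat_kron A B) (mat_kron C D) (s, s') (t, t')
      = (\<Sum>(u, v)\<in>UNIV \<times> UNIV. (A s u * C u t) * (B s' v * D v t'))"
    unfolding mat_mult_def UNIV_Times_UNIV by (intro sum.cong) (auto simp: algebra_simps)
  also have "\<dots> = (\<Sum>u\<in>UNIV. A s u * C u t) * (\<Sum>v\<in>UNIV. B s' v * D v t')"
    by (simp add: sum_product sum.cartesian_product)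
  finally show "mat_mult (mat_kron A B) (mat_kron C D) (s, s') (t, t')
      = mat_kron (mat_mult A C) (mat_mult B D) (s, s') (t, t')"
    by (simp add: mat_mult_def)
qed

lemma mat_kron_mat_id: "mat_kron mat_id mat_id = mat_id"
  by (auto simp: fun_eq_iff mat_id_def)

lemma trans_mat_sync_product:
  "trans_mat (sync_product \<Delta>A \<Delta>B) a = mat_kron (trans_mat \<Delta>A a) (trans_mat \<Delta>B a)"
  by (auto simp: fun_eq_iff trans_mat_def sync_product_def pmf_pair)

lemma word_mat_sync_product:
  "word_mat (sync_product \<Delta>A \<Delta>B) w = mat_kron (word_mat \<Delta>A w) (word_mat \<Delta>B w)"
  by (induction w)
    (simp_all add: word_mat_def mat_kron_mat_id trans_mat_sync_product mat_mult_mat_kron)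

lemma stochastic_mat_nonneg: "stochastic_mat M \<Longrightarrow> 0 \<le> M s t"
  by (simp add: stochastic_mat_def)

lemma stochastic_mat_mat_mult:
  assumes "stochastic_mat M" "stochastic_mat N"
  shows "stochastic_mat (mat_mult M N)"
proof -
  have "(\<Sum>t\<in>UNIV. mat_mult M N s t) = (\<Sum>u\<in>UNIV. M s u * (\<Sum>t\<in>UNIV. N u t))" for s
    unfolding mat_mult_def by (subst sum.swap) (simp add: sum_distrib_left)
  with assms show ?thesis
    by (auto simp: stochastic_mat_def mat_mult_def intro: sum_nonneg)
qed

lemma stochastic_mat_id: "stochastic_mat mat_id"
  by (simp add: stochastic_mat_def mat_id_def)

lemma stochastic_trans_mat: "stochastic_mat (trans_mat \<Delta> a)"
  by (simp add: stochastic_mat_def trans_mat_def sum_pmf_eq_1)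

lemma stochastic_word_mat: "stochastic_mat (word_mat \<Delta> w)"
  by (induction w)
    (simp_all add: word_mat_def stochastic_mat_id stochastic_trans_mat stochastic_mat_mat_mult)

lemma word_mat_nonneg: "0 \<le> word_mat \<Delta> w s t"
  using stochastic_word_mat stochastic_mat_nonneg by blast

lemma stochastic_mat_limit:
  assumes "\<And>n. stochastic_mat (M n)" "\<And>s t. (\<lambda>n. M n s t) \<longlonglongrightarrow> L s t"
  shows "stochastic_mat L"
proof -
  have "0 \<le> L s t" for s t
    using assms by (intro LIMSEQ_le_const[OF assms(2)]) (auto simp: stochastic_mat_def)
  moreover have "(\<lambda>n. \<Sum>t\<in>UNIV. M n s t) \<longlonglongrightarrow> (\<Sum>t\<in>UNIV. L s t)" for s
    by (intro tendsto_sum assms(2))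
  then have "(\<Sum>t\<in>UNIV. L s t) = 1" for s
    using assms(1) by (simp add: stochastic_mat_def LIMSEQ_const_iff)
  ultimately show ?thesis by (simp add: stochastic_mat_def)
qed

lemma stochastic_mat_abs_le_1:
  assumes "stochastic_mat M"
  shows "\<bar>M s t\<bar> \<le> 1"
proof -
  have "M s t \<le> (\<Sum>t'\<in>UNIV. M s t')"
    using assms by (intro member_le_sum) (auto simp: stochastic_mat_def)
  with assms show ?thesis by (simp add: stochastic_mat_def)
qed

lemma Domain_mat_support:
  assumes "stochastic_mat M"
  shows "Domain (mat_support M) = UNIV"
proof (intro set_eqI iffI UNIV_I)
  fix s
  have "(\<Sum>t\<in>UNIV. M s t) \<noteq> 0"
    using assms by (simp add: stochastic_mat_def)
  then obtain t where "M s t \<noteq> 0" by (meson sum.neutral)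
  with assms have "M s t > 0" by (simp add: stochastic_mat_def order_le_neq_trans)
  then show "s \<in> Domain (mat_support M)" by blast
qed

lemma idempotent_mat_iff_mat_support:
  "idempotent_mat M \<longleftrightarrow> mat_support (mat_mult M M) = mat_support M"
  by (auto simp: idempotent_mat_def)

lemma mat_support_mat_kron:
  assumes "\<And>s t. 0 \<le> A s t" "\<And>s t. 0 \<le> B s t"
  shows "mat_support (mat_kron A B) = prod_rel (mat_support A) (mat_support B)"
  using assms by (auto simp: prod_rel_def zero_less_mult_iff less_le)

lemma idempotent_mat_kronD:
  assumes A: "stochastic_mat A" and B: "stochastic_mat B"
    and "idempotent_mat (mat_kron A B)"
  shows "idempotent_mat A \<and> idempotent_mat B"
proof -
  have AA: "stochastic_mat (mat_mult A A)" and BB: "stochastic_mat (mat_mult B B)"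
    using A B by (simp_all add: stochastic_mat_mat_mult)
  have "prod_rel (mat_support (mat_mult A A)) (mat_support (mat_mult B B))
      = prod_rel (mat_support A) (mat_support B)"
    using assms(3) A B AA BB
    by (simp add: idempotent_mat_iff_mat_support mat_mult_mat_kron mat_support_mat_kron
        stochastic_mat_nonneg)
  moreover have "mat_support (mat_mult A A) \<noteq> {}" "mat_support (mat_mult B B) \<noteq> {}"
    using Domain_mat_support[OF AA] Domain_mat_support[OF BB] by blast+
  ultimately show ?thesis
    by (simp add: prod_rel_inject idempotent_mat_iff_mat_support)
qed

lemma recurrent_mat_kronD:
  assumes A: "stochastic_mat A" and B: "stochastic_mat B"
    and rec: "recurrent (mat_kron A B) (r, r')"
  shows "recurrent A r \<and> recurrent B r'"
proof -
  let ?S = "mat_support A" and ?T = "mat_support B"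
  have return: "(t, r) \<in> ?S\<^sup>* \<and> (t', r') \<in> ?T\<^sup>*"
    if "(r, t) \<in> ?S ^^ n" "(r', t') \<in> ?T ^^ n" for n t t'
  proof -
    have "((r, r'), (t, t')) \<in> (prod_rel ?S ?T)\<^sup>*"
      using that by (auto simp: rtrancl_power relpow_prod_rel)
    with rec have "((t, t'), (r, r')) \<in> (prod_rel ?S ?T)\<^sup>*"
      using A B by (simp add: recurrent_def mat_support_mat_kron stochastic_mat_nonneg)
    then show ?thesis by (auto simp: rtrancl_power relpow_prod_rel)
  qed
  show ?thesis unfolding recurrent_def
  proof (intro conjI allI impI)
    fix t assume "(r, t) \<in> ?S\<^sup>*"
    then obtain n where "(r, t) \<in> ?S ^^ n" by (auto simp: rtrancl_power)
    moreover obtain t' where "(r', t') \<in> ?T ^^ n"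
      using Domain_relpow[OF Domain_mat_support[OF B]] by blast
    ultimately show "(t, r) \<in> ?S\<^sup>*" using return by blast
  next
    fix t' assume "(r', t') \<in> ?T\<^sup>*"
    then obtain n where "(r', t') \<in> ?T ^^ n" by (auto simp: rtrancl_power)
    moreover obtain t where "(r, t) \<in> ?S ^^ n"
      using Domain_relpow[OF Domain_mat_support[OF A]] by blast
    ultimately show "(t', r') \<in> ?T\<^sup>*" using return by blast
  qed
qed

lemma bounded_seq_convergent_subseq:
  fixes f :: "nat \<Rightarrow> 'i::finite \<Rightarrow> real"
  assumes "\<And>n i. \<bar>f n i\<bar> \<le> C"
  obtains \<phi> L where "strict_mono \<phi>" "\<And>i. (\<lambda>n. f (\<phi> n) i) \<longlonglongrightarrow> L i"
proof -
  define v where "v n = (\<chi> i. f n i)" for n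
  have "norm (v n) \<le> CARD('i) * C" for n
  proof -
    have "norm (v n) \<le> (\<Sum>i\<in>UNIV. \<bar>f n i\<bar>)"
      using norm_le_l1_cart[of "v n"] by (simp add: v_def)
    also have "\<dots> \<le> CARD('i) * C"
      using sum_bounded_above[of UNIV "\<lambda>i. \<bar>f n i\<bar>" C] assms by simp
    finally show ?thesis .
  qed
  then have "bounded (range v)" by (auto intro: boundedI)
  then obtain \<phi> l where "strict_mono \<phi>" "(v \<circ> \<phi>) \<longlonglongrightarrow> l"
    using bounded_imp_convergent_subsequence by blast
  moreover have "(\<lambda>n. f (\<phi> n) i) \<longlonglongrightarrow> l $ i" for i
    using tendsto_vec_nth[OF \<open>(v \<circ> \<phi>) \<longlonglongrightarrow> l\<close>, of i] by (simp add: v_def o_def)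
  ultimately show ?thesis using that by blast
qed

lemma mat_kron_limit_subseq:
  fixes A :: "nat \<Rightarrow> 'q::finite \<Rightarrow> 'q \<Rightarrow> real" and B :: "nat \<Rightarrow> 'p::finite \<Rightarrow> 'p \<Rightarrow> real"
  assumes A: "\<And>n. stochastic_mat (A n)" and B: "\<And>n. stochastic_mat (B n)"
    and lim: "\<And>x y. (\<lambda>n. mat_kron (A n) (B n) x y) \<longlonglongrightarrow> M x y"
  obtains \<phi> LA LB where "strict_mono \<phi>"
    "\<And>s t. (\<lambda>n. A (\<phi> n) s t) \<longlonglongrightarrow> LA s t" "\<And>s t. (\<lambda>n. B (\<phi> n) s t) \<longlonglongrightarrow> LB s t"
    "M = mat_kron LA LB" "stochastic_mat LA" "stochastic_mat LB"
proof -
  \<comment> \<open>both factor sequences are extracted at once, indexed jointly by a sum type\<close>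
  define f where "f n = case_sum (\<lambda>(s, t). A n s t) (\<lambda>(s, t). B n s t)" for n
  have "\<bar>f n i\<bar> \<le> 1" for n i
    using A B by (auto simp: f_def stochastic_mat_abs_le_1 split: sum.split)
  then obtain \<phi> L where \<phi>: "strict_mono \<phi>" and L: "\<And>i. (\<lambda>n. f (\<phi> n) i) \<longlonglongrightarrow> L i"
    using bounded_seq_convergent_subseq by blast
  define LA where "LA s t = L (Inl (s, t))" for s t
  define LB where "LB s t = L (Inr (s, t))" for s t
  have LA: "(\<lambda>n. A (\<phi> n) s t) \<longlonglongrightarrow> LA s t" for s t
    using L[of "Inl (s, t)"] by (simp add: f_def LA_def)
  have LB: "(\<lambda>n. B (\<phi> n) s t) \<longlonglongrightarrow> LB s t" for s t
    using L[of "Inr (s, t)"] by (simp add: f_def LB_def)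
  have "M = mat_kron LA LB"
  proof (intro ext, clarify)
    fix s s' t t'
    have "(\<lambda>n. mat_kron (A (\<phi> n)) (B (\<phi> n)) (s, s') (t, t')) \<longlonglongrightarrow> mat_kron LA LB (s, s') (t, t')"
      by (simp add: tendsto_mult LA LB)
    moreover have "(\<lambda>n. mat_kron (A (\<phi> n)) (B (\<phi> n)) (s, s') (t, t')) \<longlonglongrightarrow> M (s, s') (t, t')"
      using LIMSEQ_subseq_LIMSEQ[OF lim \<phi>, of "(s, s')" "(t, t')"] by (simp add: o_def)
    ultimately show "M (s, s') (t, t') = mat_kron LA LB (s, s') (t, t')"
      using LIMSEQ_unique by blast
  qed
  moreover have "stochastic_mat LA" "stochastic_mat LB"
    using stochastic_mat_limit[OF A LA] stochastic_mat_limit[OF B LB] .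
  ultimately show ?thesis using that \<phi> LA LB by blast
qed

lemma is_leakI:
  assumes "\<And>n. idempotent_mat (word_mat \<Delta> (u n))"
    and "\<And>s t. (\<lambda>n. word_mat \<Delta> (u n) s t) \<longlonglongrightarrow> L s t"
    and "idempotent_mat L" "recurrent L r" "recurrent L q" "L r q = 0"
    and "\<And>n. word_mat \<Delta> (u n) r q > 0"
  shows "is_leak \<Delta> u"
  using assms unfolding is_leak_def by metis

theorem proposition5p2:
  fixes \<Delta>A :: "'q::finite \<Rightarrow> 'a::finite \<Rightarrow> 'q pmf"
    and \<Delta>B :: "'p::finite \<Rightarrow> 'a \<Rightarrow> 'p pmf"
  assumes "leaktight \<Delta>A" and "leaktight \<Delta>B"
  shows "leaktight (sync_product \<Delta>A \<Delta>B)"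
  unfolding leaktight_def
proof
  assume "\<exists>u. is_leak (sync_product \<Delta>A \<Delta>B) u"
  then obtain u M r q where
    idem: "\<And>n. idempotent_mat (mat_kron (word_mat \<Delta>A (u n)) (word_mat \<Delta>B (u n)))" and
    conv: "\<And>x y. (\<lambda>n. mat_kron (word_mat \<Delta>A (u n)) (word_mat \<Delta>B (u n)) x y) \<longlonglongrightarrow> M x y" and
    "idempotent_mat M" "recurrent M r" "recurrent M q" and
    lim0: "(\<lambda>n. mat_kron (word_mat \<Delta>A (u n)) (word_mat \<Delta>B (u n)) r q) \<longlonglongrightarrow> 0" and
    pos: "\<And>n. mat_kron (word_mat \<Delta>A (u n)) (word_mat \<Delta>B (u n)) r q > 0"
    unfolding is_leak_def word_mat_sync_product by blast
  obtain r1 r2 q1 q2 where rq: "r = (r1, r2)" "q = (q1, q2)" by fastforce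
  obtain \<phi> LA LB where LA: "\<And>s t. (\<lambda>n. word_mat \<Delta>A (u (\<phi> n)) s t) \<longlonglongrightarrow> LA s t"
    and LB: "\<And>s t. (\<lambda>n. word_mat \<Delta>B (u (\<phi> n)) s t) \<longlonglongrightarrow> LB s t"
    and M: "M = mat_kron LA LB" and factors: "stochastic_mat LA" "stochastic_mat LB"
    using mat_kron_limit_subseq[OF stochastic_word_mat stochastic_word_mat conv] by blast
  have "idempotent_mat LA \<and> idempotent_mat LB"
    using idempotent_mat_kronD[OF factors] \<open>idempotent_mat M\<close> M by simp
  moreover have "recurrent LA r1 \<and> recurrent LB r2" "recurrent LA q1 \<and> recurrent LB q2"
    using recurrent_mat_kronD[OF factors] \<open>recurrent M r\<close> \<open>recurrent M q\<close> M rq by simp_all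
  moreover have "LA r1 q1 * LB r2 q2 = 0"
    using LIMSEQ_unique[OF conv lim0] M rq by simp
  moreover have "idempotent_mat (word_mat \<Delta>A (u n)) \<and> idempotent_mat (word_mat \<Delta>B (u n))" for n
    using idempotent_mat_kronD[OF stochastic_word_mat stochastic_word_mat] idem by blast
  moreover have "word_mat \<Delta>A (u n) r1 q1 > 0 \<and> word_mat \<Delta>B (u n) r2 q2 > 0" for n
    using pos[of n] rq
      mat_support_mat_kron[of "word_mat \<Delta>A (u n)" "word_mat \<Delta>B (u n)", OF word_mat_nonneg word_mat_nonneg]
    by (auto simp: set_eq_iff)
  ultimately have "is_leak \<Delta>A (u \<circ> \<phi>) \<or> is_leak \<Delta>B (u \<circ> \<phi>)"
    using is_leakI[of \<Delta>A "u \<circ> \<phi>" LA r1 q1] is_leakI[of \<Delta>B "u \<circ> \<phi>" LB r2 q2] LA LB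
    by (auto simp: o_def)
  with assms show False unfolding leaktight_def by blast
qed

end
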